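(* Let $T>0$, $H_1,H_2\in(1/2,1)$ and $\rho\in[-1,1]$. Let $(\tilde W^1,\tilde W^2)$ be a two-dimensional standard Brownian motion, $W^1=\tilde W^1$, $W^2=\rho\tilde W^1+\sqrt{1-\rho^2}\,\tilde W^2$, and for $l=1,2$ let $B^l=(B^l_t)_{t\in[0,T]}$ be (a continuous modification of) the Wiener integral $B^l_t=\int_0^T K_{H_l}(t,s)\,dW^l_s$. Then for all $s,t\in[0,T]$, $$\mathbb E\{B^1_tB^2_s\}=\rho\, c_{H_1}c_{H_2}\int_0^t du\int_0^s dv\ \beta(u,v)\,|u-v|^{H_1+H_2-2}\,u^{H_1-H_2}\,v^{H_2-H_1},$$ where $\beta(u,v)=B(H_1-1/2,\,2-H_1-H_2)$ if $u\le v$ and $\beta(u,v)=B(H_2-1/2,\,2-H_1-H_2)$ if $v<u$.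
   Context: $B(\cdot,\cdot)$ denotes the Beta function. For $H\in(1/2,1)$, $c_H=\sqrt{H(2H-1)/B(2-2H,H-1/2)}$ and $K_H(t,s)=c_H\mathbf 1_{(0,t)}(s)\,s^{1/2-H}\int_s^t(u-s)^{H-3/2}u^{H-1/2}\,du$ for $0\le s,t\le T$. *)

theory Defs
  imports "HOL-Probability.Probability"
begin

definition cH :: "real \<Rightarrow> real" where
  "cH H = sqrt (H * (2 * H - 1) / Beta (2 - 2 * H) (H - 1/2))"

definition KH :: "real \<Rightarrow> real \<Rightarrow> real \<Rightarrow> real" where
  "KH H t s = cH H * indicator {0<..<t} s * s powr (1/2 - H) *
      (LBINT u:{s..t}. (u - s) powr (H - 3/2) * u powr (H - 1/2))"

definition std_BM :: "'a measure \<Rightarrow> (real \<Rightarrow> 'a \<Rightarrow> real) \<Rightarrow> bool" where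
  "std_BM M W \<longleftrightarrow>
     (\<forall>t. W t \<in> borel_measurable M) \<and>
     (\<forall>\<omega>\<in>space M. W 0 \<omega> = 0) \<and>
     (\<forall>\<omega>\<in>space M. continuous_on {0..} (\<lambda>t. W t \<omega>)) \<and>
     (\<forall>s t. 0 \<le> s \<and> s < t \<longrightarrow>
        distributed M lborel (\<lambda>\<omega>. W t \<omega> - W s \<omega>) (normal_density 0 (sqrt (t - s)))) \<and>
     (\<forall>(n::nat) (tt::nat \<Rightarrow> real). 0 \<le> tt 0 \<and> (\<forall>i<n. tt i < tt (Suc i)) \<longrightarrow>
        prob_space.indep_vars M (\<lambda>_. borel) (\<lambda>i \<omega>. W (tt (Suc i)) \<omega> - W (tt i) \<omega>) {..<n})"

definition step_fun :: "nat \<Rightarrow> (nat \<Rightarrow> real) \<Rightarrow> (nat \<Rightarrow> real) \<Rightarrow> (nat \<Rightarrow> real) \<Rightarrow> real \<Rightarrow> real" where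
  "step_fun n c a b r = (\<Sum>i<n. c i * indicator {a i<..b i} r)"

definition step_int :: "(real \<Rightarrow> 'a \<Rightarrow> real) \<Rightarrow> nat \<Rightarrow> (nat \<Rightarrow> real) \<Rightarrow> (nat \<Rightarrow> real) \<Rightarrow> (nat \<Rightarrow> real) \<Rightarrow> 'a \<Rightarrow> real" where
  "step_int W n c a b \<omega> = (\<Sum>i<n. c i * (W (b i) \<omega> - W (a i) \<omega>))"

definition wiener_integral ::
  "'a measure \<Rightarrow> (real \<Rightarrow> 'a \<Rightarrow> real) \<Rightarrow> real \<Rightarrow> (real \<Rightarrow> real) \<Rightarrow> ('a \<Rightarrow> real) \<Rightarrow> bool" where
  "wiener_integral M W T f I \<longleftrightarrow>
     I \<in> borel_measurable M \<and>
     (\<exists>(n::nat \<Rightarrow> nat) (c::nat \<Rightarrow> nat \<Rightarrow> real) a b.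
        (\<forall>k i. 0 \<le> a k i \<and> a k i \<le> b k i \<and> b k i \<le> T) \<and>
        ((\<lambda>k. \<integral>\<^sup>+ r\<in>{0..T}. ennreal ((f r - step_fun (n k) (c k) (a k) (b k) r)\<^sup>2) \<partial>lborel)
            \<longlonglongrightarrow> 0) \<and>
        ((\<lambda>k. \<integral>\<^sup>+ \<omega>. ennreal ((I \<omega> - step_int W (n k) (c k) (a k) (b k) \<omega>)\<^sup>2) \<partial>M)
            \<longlonglongrightarrow> 0))"

definition beta_fn :: "real \<Rightarrow> real \<Rightarrow> real \<Rightarrow> real \<Rightarrow> real" where
  "beta_fn H1 H2 u v = (if u \<le> v then Beta (H1 - 1/2) (2 - H1 - H2) else Beta (H2 - 1/2) (2 - H1 - H2))"

end

theory Submission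
  imports Defs
begin

(* Since E[W1_x W2_y] = rho min(x,y), the covariance of two step-function integrals against
   W1 and W2 is rho times the L2(0,T) inner product of the step functions; passing to the L2
   limits that define the Wiener integrals gives E[B1_t B2_s] = rho \<integral>_0^T K_H1(t,r) K_H2(s,r) dr.
   Expanding both kernels and integrating in r first (Tonelli), for fixed u, v one meets
   \<integral>_0^min(u,v) r^(1-H1-H2) (u-r)^(H1-3/2) (v-r)^(H2-3/2) dr, which the substitution
   r = x u v / (v - u + x u) turns into a Beta integral over [0,1]. *)

section \<open>A Beta-type integral\<close>

lemma Beta_substitution_integrand:
  fixes a b u v x D :: real
  assumes "0 < u" "u < v" and x: "0 < x" "x < 1" and D: "D = v - u + x * u"
  shows "(x * u * v / D) powr (a - 1) * (u - x * u * v / D) powr (b - 1) * (v - x * u * v / D) powr (-(a + b))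
          * (u * v * (v - u) / D\<^sup>2)
        = (u powr (a + b - 1) * v powr (-b) * (v - u) powr (-a)) * (x powr (a - 1) * (1 - x) powr (b - 1))"
proof -
  have Dpos: "D > 0" unfolding D using assms by (smt (verit) mult_pos_pos)
  have pos: "v - u > 0" "1 - x > 0" using assms by auto
  have e1: "u - x * u * v / D = u * (v - u) * (1 - x) / D"
    using Dpos unfolding D by (simp add: field_simps; simp add: algebra_simps)
  have e2: "v - x * u * v / D = v * (v - u) / D"
    using Dpos unfolding D by (simp add: field_simps; simp add: algebra_simps)
  have "(x * u * v / D) powr (a - 1) = exp ((a - 1) * (ln x + ln u + ln v - ln D))"
    and "(u * (v - u) * (1 - x) / D) powr (b - 1) = exp ((b - 1) * (ln u + ln (v - u) + ln (1 - x) - ln D))"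
    and "(v * (v - u) / D) powr (-(a + b)) = exp ((-(a + b)) * (ln v + ln (v - u) - ln D))"
    using Dpos pos assms by (simp_all add: powr_def ln_mult ln_div)
  moreover have "u * v * (v - u) / D\<^sup>2 = exp (ln u + ln v + ln (v - u) - 2 * ln D)"
  proof -
    have "D\<^sup>2 = exp (2 * ln D)"
      using Dpos by (simp add: powr_def powr_numeral[symmetric])
    then show ?thesis using Dpos pos assms by (simp add: exp_diff exp_add)
  qed
  moreover have "u powr (a + b - 1) * v powr (-b) * (v - u) powr (-a) * (x powr (a - 1) * (1 - x) powr (b - 1))
     = exp ((a + b - 1) * ln u + (-b) * ln v + (-a) * ln (v - u) + (a - 1) * ln x + (b - 1) * ln (1 - x))"
    using pos assms by (simp add: powr_def exp_add exp_diff exp_minus field_simps)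
  ultimately show ?thesis unfolding e1 e2
    by (simp only: exp_add[symmetric]) (simp add: algebra_simps)
qed

lemma nn_integral_Beta_kernel:
  fixes a b u v :: real
  assumes a: "a > 0" and b: "b > 0" and uv: "0 < u" "u < v"
  shows "(\<integral>\<^sup>+ r. ennreal (r powr (a - 1) * (u - r) powr (b - 1) * (v - r) powr (-(a + b)) * indicator {0<..<u} r) \<partial>lborel)
       = ennreal (Beta a b * (u powr (a + b - 1) * v powr (-b) * (v - u) powr (-a)))"
proof -
  define f where "f r = r powr (a - 1) * (u - r) powr (b - 1) * (v - r) powr (-(a + b))" for r
  define g where "g x = x * u * v / (v - u + x * u)" for x
  define g' where "g' x = u * v * (v - u) / (v - u + x * u)\<^sup>2" for x
  define C where "C = u powr (a + b - 1) * v powr (-b) * (v - u) powr (-a)"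
  have Dpos: "v - u + x * u > 0" if "x \<in> {0..1}" for x
    using that uv by (smt (verit) atLeastAtMost_iff mult_nonneg_nonneg)
  have g0: "g 0 = 0" and g1: "g 1 = u" using uv by (auto simp: g_def)
  have "(\<integral>\<^sup>+ r. ennreal (f r * indicator {0<..<u} r) \<partial>lborel)
      = (\<integral>\<^sup>+ r. ennreal (f r * indicator {g 0..g 1} r) \<partial>lborel)"
    unfolding g0 g1 by (rule nn_integral_cong) (auto simp: f_def indicator_def)
  also have "\<dots> = (\<integral>\<^sup>+ x. ennreal (f (g x) * g' x * indicator {0..1} x) \<partial>lborel)"
  proof (rule nn_integral_substitution)
    show "set_borel_measurable borel {g 0..g 1} f"
      unfolding f_def set_borel_measurable_def by measurable
    show "(g has_real_derivative g' x) (at x)" if "x \<in> {0..1}" for x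
      using Dpos[OF that] unfolding g_def g'_def
      by (auto intro!: derivative_eq_intros simp: field_simps power2_eq_square)
    show "continuous_on {0..1} g'"
      unfolding g'_def using Dpos by (auto intro!: continuous_intros) (smt (verit) Dpos atLeastAtMost_iff)
    show "0 \<le> g' x" if "x \<in> {0..1}" for x
      using uv unfolding g'_def by auto
  qed simp
  also have "\<dots> = (\<integral>\<^sup>+ x. ennreal C * ennreal (indicator {0..1} x * (x powr (a - 1) * (1 - x) powr (b - 1))) \<partial>lborel)"
  proof (rule nn_integral_cong)
    fix x :: real
    show "ennreal (f (g x) * g' x * indicator {0..1} x)
        = ennreal C * ennreal (indicator {0..1} x * (x powr (a - 1) * (1 - x) powr (b - 1)))"
    proof (cases "x \<in> {0<..<1}")
      case True
      then show ?thesis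
        using Beta_substitution_integrand[OF uv, of x "v - u + x * u" a b]
        by (simp add: f_def g_def g'_def C_def ennreal_mult'[symmetric] mult_ac)
    next
      case False
      then consider "x = 0" | "x = 1" | "x \<notin> {0..1}" by fastforce
      then show ?thesis by cases (use uv in \<open>auto simp: f_def g_def g'_def\<close>)
    qed
  qed
  also have "\<dots> = ennreal C * ennreal (Beta a b)"
    by (subst nn_integral_cmult)
      (auto simp: nn_integral_has_integral_lebesgue[OF _ has_integral_Beta_real[OF a b]])
  also have "\<dots> = ennreal (Beta a b * C)"
    using a b by (simp add: ennreal_mult[symmetric] Beta_def Gamma_real_pos C_def mult.commute)
  finally show ?thesis unfolding f_def C_def by (simp add: mult_ac)
qed

lemma beta_fn_nonneg:
  assumes "1/2 < H1" "1/2 < H2" "H1 < 1" "H2 < 1"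
  shows "beta_fn H1 H2 u v \<ge> 0"
  using assms unfolding beta_fn_def by (simp add: Beta_def Gamma_real_pos)

lemma nn_integral_KH_cross_kernel:
  fixes H1 H2 u v :: real
  assumes H: "1/2 < H1" "H1 < 1" "1/2 < H2" "H2 < 1" and uv: "0 < u" "0 < v" "u \<noteq> v"
  shows "(\<integral>\<^sup>+ r. ennreal (r powr (1 - H1 - H2) * (u - r) powr (H1 - 3/2) * (v - r) powr (H2 - 3/2)
            * indicator {0<..<min u v} r) \<partial>lborel)
     = ennreal (beta_fn H1 H2 u v * \<bar>u - v\<bar> powr (H1 + H2 - 2) * u powr (1/2 - H2) * v powr (1/2 - H1))"
proof (cases "u < v")
  case True
  have e: "2 - H1 - H2 - 1 = 1 - H1 - H2" "H1 - 1/2 - 1 = H1 - 3/2" "-(2 - H1 - H2 + (H1 - 1/2)) = H2 - 3/2"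
     "2 - H1 - H2 + (H1 - 1/2) - 1 = 1/2 - H2" "-(H1 - 1/2) = 1/2 - H1" "-(2 - H1 - H2) = H1 + H2 - 2"
    by simp_all
  have *: "min u v = u" "\<bar>u - v\<bar> = v - u" "u \<le> v" using True by auto
  show ?thesis
    using nn_integral_Beta_kernel[of "2 - H1 - H2" "H1 - 1/2" u v] H uv True
    unfolding * e beta_fn_def by (simp add: Beta_commute mult_ac)
next
  case False
  then have "v < u" using uv by auto
  have e: "2 - H1 - H2 - 1 = 1 - H1 - H2" "H2 - 1/2 - 1 = H2 - 3/2" "-(2 - H1 - H2 + (H2 - 1/2)) = H1 - 3/2"
     "2 - H1 - H2 + (H2 - 1/2) - 1 = 1/2 - H1" "-(H2 - 1/2) = 1/2 - H2" "-(2 - H1 - H2) = H1 + H2 - 2"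
    by simp_all
  have *: "min u v = v" "\<bar>u - v\<bar> = u - v" "\<not> u \<le> v" using \<open>v < u\<close> by auto
  show ?thesis
    using nn_integral_Beta_kernel[of "2 - H1 - H2" "H2 - 1/2" v u] H uv \<open>v < u\<close>
    unfolding * e beta_fn_def by (simp add: Beta_commute mult_ac)
qed

section \<open>Products of the kernels K_H\<close>

lemma nn_integral_shifted_powr:
  fixes p r c :: real
  assumes p: "p > -1" and c: "r \<le> c"
  shows "(\<integral>\<^sup>+ u. ennreal ((u - r) powr p * indicator {r..c} u) \<partial>lborel) = ennreal ((c - r) powr (p + 1) / (p + 1))"
proof -
  have "(\<integral>\<^sup>+ u. ennreal ((u - r) powr p * indicator {r..c} u) \<partial>lborel)
     = (\<integral>\<^sup>+ u. ennreal ((u - r) powr p * indicator {(\<lambda>x. x + r) 0..(\<lambda>x. x + r) (c - r)} u) \<partial>lborel)"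
    by simp
  also have "\<dots> = (\<integral>\<^sup>+ x. ennreal (((x + r) - r) powr p * 1 * indicator {0..c - r} x) \<partial>lborel)"
    by (rule nn_integral_substitution)
      (use c in \<open>auto intro!: derivative_eq_intros simp: set_borel_measurable_def\<close>)
  also have "\<dots> = (\<integral>\<^sup>+ x. ennreal (indicator {0..c - r} x * x powr p) \<partial>lborel)"
    by (simp add: mult.commute)
  also have "\<dots> = ennreal ((c - r) powr (p + 1) / (p + 1))"
    by (rule nn_integral_has_integral_lebesgue) (use has_integral_powr_from_0[of p "c - r"] p c in auto)
  finally show ?thesis .
qed

definition KH_inner_integral :: "real \<Rightarrow> real \<Rightarrow> real \<Rightarrow> ennreal" where
  "KH_inner_integral H t r =
     (\<integral>\<^sup>+ u. ennreal ((u - r) powr (H - 3/2) * u powr (H - 1/2) * indicator {r<..t} u) \<partial>lborel)"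

lemma KH_inner_integral_measurable [measurable]:
  "(\<lambda>r. KH_inner_integral H t r) \<in> borel_measurable lborel"
  unfolding KH_inner_integral_def indicator_def by (simp add: of_bool_def) measurable

lemma KH_inner_integral_finite:
  fixes H r t :: real
  assumes H: "1/2 < H" and r: "0 < r" "r < t"
  shows "KH_inner_integral H t r < \<infinity>"
proof -
  have "KH_inner_integral H t r
     \<le> (\<integral>\<^sup>+ u. ennreal (t powr (H - 1/2)) * ennreal ((u - r) powr (H - 3/2) * indicator {r..t} u) \<partial>lborel)"
    unfolding KH_inner_integral_def
  proof (rule nn_integral_mono)
    fix u :: real
    have "(u - r) powr (H - 3/2) * u powr (H - 1/2) * indicator {r<..t} u
        \<le> t powr (H - 1/2) * ((u - r) powr (H - 3/2) * indicator {r..t} u)"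
    proof (cases "u \<in> {r<..t}")
      case True
      then have "u powr (H - 1/2) \<le> t powr (H - 1/2)" using H r by (intro powr_mono2) auto
      then show ?thesis using True by (simp add: mult.commute mult_left_mono)
    qed simp
    then show "ennreal ((u - r) powr (H - 3/2) * u powr (H - 1/2) * indicator {r<..t} u)
        \<le> ennreal (t powr (H - 1/2)) * ennreal ((u - r) powr (H - 3/2) * indicator {r..t} u)"
      by (simp add: ennreal_mult'[symmetric] ennreal_leI)
  qed
  also have "\<dots> = ennreal (t powr (H - 1/2)) * ennreal ((t - r) powr (H - 3/2 + 1) / (H - 3/2 + 1))"
    using H r by (subst nn_integral_cmult) (auto simp: nn_integral_shifted_powr)
  also have "\<dots> < \<infinity>" by (simp add: ennreal_mult'[symmetric])
  finally show ?thesis .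
qed

lemma cH_pos:
  assumes "1/2 < H" "H < 1"
  shows "cH H > 0"
proof -
  have "Beta (2 - 2 * H) (H - 1/2) > 0" using assms by (simp add: Beta_def Gamma_real_pos)
  then show ?thesis using assms unfolding cH_def by (simp add: divide_pos_pos)
qed

lemma KH_nonneg_and_eq_KH_inner_integral:
  assumes H: "1/2 < H" "H < 1"
  shows "KH H t r \<ge> 0"
    and "ennreal (KH H t r)
       = ennreal (cH H) * ennreal (indicator {0<..<t} r * r powr (1/2 - H)) * KH_inner_integral H t r"
proof -
  have "KH H t r \<ge> 0 \<and> ennreal (KH H t r)
      = ennreal (cH H) * ennreal (indicator {0<..<t} r * r powr (1/2 - H)) * KH_inner_integral H t r"
  proof (cases "r \<in> {0<..<t}")
    case False
    then show ?thesis by (simp add: KH_def)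
  next
    case True
    let ?g = "\<lambda>u. (u - r) powr (H - 3/2) * u powr (H - 1/2)"
    have fin: "KH_inner_integral H t r < \<infinity>"
      using KH_inner_integral_finite[OF H(1)] True by simp
    have "(LBINT u:{r..t}. ?g u) = enn2real (\<integral>\<^sup>+ u. ennreal (indicator {r..t} u * ?g u) \<partial>lborel)"
      unfolding set_lebesgue_integral_def by (subst integral_eq_nn_integral) (auto simp: indicator_def)
    also have "(\<integral>\<^sup>+ u. ennreal (indicator {r..t} u * ?g u) \<partial>lborel) = KH_inner_integral H t r"
      unfolding KH_inner_integral_def by (rule nn_integral_cong) (auto simp: indicator_def)
    finally have L: "(LBINT u:{r..t}. ?g u) = enn2real (KH_inner_integral H t r)" .
    have c: "cH H \<ge> 0" using cH_pos[OF H] by simp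
    have "ennreal (cH H * r powr (1/2 - H) * enn2real (KH_inner_integral H t r))
        = ennreal (cH H * r powr (1/2 - H)) * KH_inner_integral H t r"
      using c fin by (subst ennreal_mult) auto
    then show ?thesis using True fin c unfolding KH_def L
      by (auto simp: ennreal_mult'[symmetric] ennreal_mult[symmetric])
  qed
  then show "KH H t r \<ge> 0"
    and "ennreal (KH H t r)
       = ennreal (cH H) * ennreal (indicator {0<..<t} r * r powr (1/2 - H)) * KH_inner_integral H t r"
    by auto
qed

lemma KH_measurable [measurable]:
  assumes "1/2 < H" "H < 1"
  shows "(\<lambda>r. KH H t r) \<in> borel_measurable borel"
proof -
  have "(\<lambda>r. KH H t r) = (\<lambda>r. enn2real (ennreal (cH H)
      * ennreal (indicator {0<..<t} r * r powr (1/2 - H)) * KH_inner_integral H t r))"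
    using KH_nonneg_and_eq_KH_inner_integral[OF assms, of t] by (metis enn2real_ennreal)
  then show ?thesis by simp
qed

definition KH_product_integrand :: "real \<Rightarrow> real \<Rightarrow> real \<Rightarrow> real \<Rightarrow> real \<Rightarrow> real \<Rightarrow> real \<Rightarrow> ennreal" where
  "KH_product_integrand H1 H2 t s r u v =
     ennreal (indicator {0<..<t} r * indicator {0<..<s} r * r powr (1 - H1 - H2)) *
     ennreal ((u - r) powr (H1 - 3/2) * u powr (H1 - 1/2) * indicator {r<..t} u) *
     ennreal ((v - r) powr (H2 - 3/2) * v powr (H2 - 1/2) * indicator {r<..s} v)"

lemma KH_product_integrand_measurable [measurable (raw)]:
  "f \<in> borel_measurable M \<Longrightarrow> g \<in> borel_measurable M \<Longrightarrow> h \<in> borel_measurable M \<Longrightarrow>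
   (\<lambda>x. KH_product_integrand H1 H2 t s (f x) (g x) (h x)) \<in> borel_measurable M"
  unfolding KH_product_integrand_def indicator_def by (simp add: of_bool_def) measurable

definition fBm_cross_density :: "real \<Rightarrow> real \<Rightarrow> real \<Rightarrow> real \<Rightarrow> real" where
  "fBm_cross_density H1 H2 u v =
     beta_fn H1 H2 u v * \<bar>u - v\<bar> powr (H1 + H2 - 2) * u powr (H1 - H2) * v powr (H2 - H1)"

lemma fBm_cross_density_measurable [measurable]:
  assumes [measurable]: "f \<in> borel_measurable M" "g \<in> borel_measurable M"
  shows "(\<lambda>x. fBm_cross_density H1 H2 (f x) (g x)) \<in> borel_measurable M"
  unfolding fBm_cross_density_def beta_fn_def by measurable

lemma fBm_cross_density_nonneg:
  assumes "1/2 < H1" "H1 < 1" "1/2 < H2" "H2 < 1"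
  shows "fBm_cross_density H1 H2 u v \<ge> 0"
  using beta_fn_nonneg[of H1 H2 u v] assms unfolding fBm_cross_density_def by simp

lemma KH_mult_KH_eq_nn_integral:
  assumes H: "1/2 < H1" "H1 < 1" "1/2 < H2" "H2 < 1"
  shows "ennreal (KH H1 t r * KH H2 s r)
       = ennreal (cH H1 * cH H2) * (\<integral>\<^sup>+ u. \<integral>\<^sup>+ v. KH_product_integrand H1 H2 t s r u v \<partial>lborel \<partial>lborel)"
proof -
  note K1 = KH_nonneg_and_eq_KH_inner_integral[OF H(1,2), of t r]
    and K2 = KH_nonneg_and_eq_KH_inner_integral[OF H(3,4), of s r]
  have "(\<integral>\<^sup>+ u. \<integral>\<^sup>+ v. KH_product_integrand H1 H2 t s r u v \<partial>lborel \<partial>lborel)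
     = ennreal (indicator {0<..<t} r * indicator {0<..<s} r * r powr (1 - H1 - H2))
       * KH_inner_integral H1 t r * KH_inner_integral H2 s r"
    unfolding KH_product_integrand_def KH_inner_integral_def
    by (simp add: nn_integral_cmult nn_integral_multc mult.assoc)
  moreover have "ennreal (indicator {0<..<t} r * r powr (1/2 - H1)) * ennreal (indicator {0<..<s} r * r powr (1/2 - H2))
      = ennreal (indicator {0<..<t} r * indicator {0<..<s} r * r powr (1 - H1 - H2))"
  proof (cases "r > 0")
    case True
    then have "r powr (1/2 - H1) * r powr (1/2 - H2) = r powr (1 - H1 - H2)"
      by (simp add: powr_add[symmetric] algebra_simps)
    then show ?thesis by (simp add: ennreal_mult[symmetric] mult_ac indicator_def)
  qed (simp add: indicator_def)
  moreover have "ennreal (cH H1 * cH H2) = ennreal (cH H1) * ennreal (cH H2)"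
    using cH_pos[OF H(1,2)] cH_pos[OF H(3,4)] by (simp add: ennreal_mult)
  ultimately show ?thesis
    using K1 K2 by (simp add: ennreal_mult mult_ac)
qed

lemma nn_integral_KH_product_integrand:
  assumes H: "1/2 < H1" "H1 < 1" "1/2 < H2" "H2 < 1" and "u \<noteq> v"
  shows "(\<integral>\<^sup>+ r. KH_product_integrand H1 H2 t s r u v \<partial>lborel)
       = ennreal (fBm_cross_density H1 H2 u v * indicator {0<..t} u * indicator {0<..s} v)"
proof (cases "u \<in> {0<..t} \<and> v \<in> {0<..s}")
  case False
  then have "KH_product_integrand H1 H2 t s r u v = 0" for r
    unfolding KH_product_integrand_def by (auto simp: indicator_def)
  then show ?thesis using False by (auto simp: indicator_def)
next
  case True
  then have u: "0 < u" "u \<le> t" and v: "0 < v" "v \<le> s" by auto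
  have "KH_product_integrand H1 H2 t s r u v = ennreal (u powr (H1 - 1/2) * v powr (H2 - 1/2)) *
     ennreal (r powr (1 - H1 - H2) * (u - r) powr (H1 - 3/2) * (v - r) powr (H2 - 3/2) * indicator {0<..<min u v} r)"
    for r
    using u v unfolding KH_product_integrand_def
    by (cases "r \<in> {0<..<min u v}") (auto simp: ennreal_mult'[symmetric] ennreal_mult[symmetric] indicator_def mult_ac)
  then have "(\<integral>\<^sup>+ r. KH_product_integrand H1 H2 t s r u v \<partial>lborel)
     = ennreal (u powr (H1 - 1/2) * v powr (H2 - 1/2))
       * ennreal (beta_fn H1 H2 u v * \<bar>u - v\<bar> powr (H1 + H2 - 2) * u powr (1/2 - H2) * v powr (1/2 - H1))"
    using nn_integral_KH_cross_kernel[OF H u(1) v(1) \<open>u \<noteq> v\<close>] by (simp add: nn_integral_cmult)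
  also have "\<dots> = ennreal (fBm_cross_density H1 H2 u v)"
  proof -
    have "u powr (H1 - 1/2) * u powr (1/2 - H2) = u powr (H1 - H2)"
      and "v powr (H2 - 1/2) * v powr (1/2 - H1) = v powr (H2 - H1)"
      using u v by (simp_all add: powr_add[symmetric])
    then show ?thesis
      using beta_fn_nonneg[of H1 H2 u v] H unfolding fBm_cross_density_def
      by (subst ennreal_mult[symmetric]) (auto simp: mult_ac)
  qed
  finally show ?thesis using True by simp
qed

lemma nn_integral_KH_mult_KH:
  assumes H: "1/2 < H1" "H1 < 1" "1/2 < H2" "H2 < 1"
  shows "(\<integral>\<^sup>+ r. ennreal (KH H1 t r * KH H2 s r) \<partial>lborel) =
    ennreal (cH H1 * cH H2) * (\<integral>\<^sup>+ u. \<integral>\<^sup>+ v.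
      ennreal (fBm_cross_density H1 H2 u v * indicator {0<..t} u * indicator {0<..s} v) \<partial>lborel \<partial>lborel)"
proof -
  have "(\<integral>\<^sup>+ r. ennreal (KH H1 t r * KH H2 s r) \<partial>lborel) = ennreal (cH H1 * cH H2) *
      (\<integral>\<^sup>+ r. \<integral>\<^sup>+ u. \<integral>\<^sup>+ v. KH_product_integrand H1 H2 t s r u v \<partial>lborel \<partial>lborel \<partial>lborel)"
    unfolding KH_mult_KH_eq_nn_integral[OF H] by (rule nn_integral_cmult) measurable
  also have "(\<integral>\<^sup>+ r. \<integral>\<^sup>+ u. \<integral>\<^sup>+ v. KH_product_integrand H1 H2 t s r u v \<partial>lborel \<partial>lborel \<partial>lborel)
      = (\<integral>\<^sup>+ u. \<integral>\<^sup>+ r. \<integral>\<^sup>+ v. KH_product_integrand H1 H2 t s r u v \<partial>lborel \<partial>lborel \<partial>lborel)"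
    by (rule lborel_pair.Fubini'[symmetric]) measurable
  also have "\<dots> = (\<integral>\<^sup>+ u. \<integral>\<^sup>+ v. \<integral>\<^sup>+ r. KH_product_integrand H1 H2 t s r u v \<partial>lborel \<partial>lborel \<partial>lborel)"
    by (rule nn_integral_cong, rule lborel_pair.Fubini'[symmetric]) measurable
  also have "\<dots> = (\<integral>\<^sup>+ u. \<integral>\<^sup>+ v.
      ennreal (fBm_cross_density H1 H2 u v * indicator {0<..t} u * indicator {0<..s} v) \<partial>lborel \<partial>lborel)"
  proof (rule nn_integral_cong)
    fix u :: real
    show "(\<integral>\<^sup>+ v. \<integral>\<^sup>+ r. KH_product_integrand H1 H2 t s r u v \<partial>lborel \<partial>lborel)
        = (\<integral>\<^sup>+ v. ennreal (fBm_cross_density H1 H2 u v * indicator {0<..t} u * indicator {0<..s} v) \<partial>lborel)"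
      by (intro nn_integral_cong_AE eventually_mono[OF AE_lborel_singleton[of u]])
        (metis nn_integral_KH_product_integrand[OF H])
  qed
  finally show ?thesis .
qed

lemma integral_KH_mult_KH:
  assumes H: "1/2 < H1" "H1 < 1" "1/2 < H2" "H2 < 1"
    and int: "integrable lborel (\<lambda>r. KH H1 t r * KH H2 s r)"
  shows "(LINT r|lborel. KH H1 t r * KH H2 s r)
       = cH H1 * cH H2 * (LBINT u:{0..t}. (LBINT v:{0..s}. fBm_cross_density H1 H2 u v))"
proof -
  define F where "F u = (\<integral>\<^sup>+ v. ennreal (fBm_cross_density H1 H2 u v * indicator {0<..s} v) \<partial>lborel)" for u
  define Q where "Q = (\<integral>\<^sup>+ u. \<integral>\<^sup>+ v.
    ennreal (fBm_cross_density H1 H2 u v * indicator {0<..t} u * indicator {0<..s} v) \<partial>lborel \<partial>lborel)"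
  have c: "cH H1 * cH H2 > 0" using cH_pos H by simp
  have KK_nonneg: "KH H1 t r * KH H2 s r \<ge> 0" for r
    using KH_nonneg_and_eq_KH_inner_integral(1) H by simp
  have [measurable]: "(\<lambda>r. KH H1 t r) \<in> borel_measurable borel" "(\<lambda>r. KH H2 s r) \<in> borel_measurable borel"
    using H by simp_all
  have L: "(LINT r|lborel. KH H1 t r * KH H2 s r) = enn2real (ennreal (cH H1 * cH H2) * Q)"
    by (subst integral_eq_nn_integral) (use KK_nonneg nn_integral_KH_mult_KH[OF H] in \<open>auto simp: Q_def\<close>)
  have "ennreal (cH H1 * cH H2) * Q < \<infinity>"
    using nn_integral_eq_integral[OF int] KK_nonneg unfolding nn_integral_KH_mult_KH[OF H] Q_def by simp
  then have "Q < \<infinity>" using c by (auto simp: ennreal_mult_less_top)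
  then have inner_finite: "AE u in lborel. (\<integral>\<^sup>+ v.
      ennreal (fBm_cross_density H1 H2 u v * indicator {0<..t} u * indicator {0<..s} v) \<partial>lborel) \<noteq> \<infinity>"
    unfolding Q_def by (intro nn_integral_PInf_AE) auto
  have inner: "(LBINT v:{0..s}. fBm_cross_density H1 H2 u v) = enn2real (F u)" for u
  proof -
    have "(LBINT v:{0..s}. fBm_cross_density H1 H2 u v)
        = enn2real (\<integral>\<^sup>+ v. ennreal (indicator {0..s} v * fBm_cross_density H1 H2 u v) \<partial>lborel)"
      unfolding set_lebesgue_integral_def
      by (subst integral_eq_nn_integral) (auto simp: fBm_cross_density_nonneg[OF H])
    also have "(\<integral>\<^sup>+ v. ennreal (indicator {0..s} v * fBm_cross_density H1 H2 u v) \<partial>lborel) = F u"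
      unfolding F_def by (rule nn_integral_cong) (auto simp: indicator_def fBm_cross_density_def)
    finally show ?thesis .
  qed
  have "(LBINT u:{0..t}. (LBINT v:{0..s}. fBm_cross_density H1 H2 u v)) = (LBINT u:{0..t}. enn2real (F u))"
    by (simp only: inner)
  also have "\<dots> = enn2real (\<integral>\<^sup>+ u. ennreal (indicator {0..t} u * enn2real (F u)) \<partial>lborel)"
    unfolding set_lebesgue_integral_def by (subst integral_eq_nn_integral) (auto simp: F_def)
  also have "(\<integral>\<^sup>+ u. ennreal (indicator {0..t} u * enn2real (F u)) \<partial>lborel) = Q"
    unfolding Q_def
  proof (rule nn_integral_cong_AE)
    show "AE u in lborel. ennreal (indicator {0..t} u * enn2real (F u)) = (\<integral>\<^sup>+ v.
        ennreal (fBm_cross_density H1 H2 u v * indicator {0<..t} u * indicator {0<..s} v) \<partial>lborel)"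
      using inner_finite
    proof eventually_elim
      case (elim u)
      show ?case
      proof (cases "u \<in> {0<..t}")
        case True
        then show ?thesis using elim by (simp add: F_def indicator_def ennreal_enn2real_if)
      next
        case False
        then consider "u = 0" | "u \<notin> {0..t}" by fastforce
        then show ?thesis by cases (auto simp: indicator_def fBm_cross_density_def F_def)
      qed
    qed
  qed
  finally show ?thesis unfolding L using c by (simp add: enn2real_mult)
qed

section \<open>Square-integrable functions\<close>

lemma integrable_mult_of_square_integrable:
  fixes Z W :: "'a \<Rightarrow> real"
  assumes [measurable]: "Z \<in> borel_measurable M" "W \<in> borel_measurable M"
    and "integrable M (\<lambda>x. (Z x)\<^sup>2)" "integrable M (\<lambda>x. (W x)\<^sup>2)"
  shows "integrable M (\<lambda>x. Z x * W x)"
proof (rule Bochner_Integration.integrable_bound)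
  show "integrable M (\<lambda>x. (Z x)\<^sup>2 + (W x)\<^sup>2)" using assms by auto
  show "AE x in M. norm (Z x * W x) \<le> norm ((Z x)\<^sup>2 + (W x)\<^sup>2)"
  proof (intro AE_I2)
    fix x
    have "2 * (\<bar>Z x\<bar> * \<bar>W x\<bar>) \<le> (Z x)\<^sup>2 + (W x)\<^sup>2"
      using sum_squares_bound[of "\<bar>Z x\<bar>" "\<bar>W x\<bar>"] by (simp add: mult.assoc)
    then have "\<bar>Z x\<bar> * \<bar>W x\<bar> \<le> (Z x)\<^sup>2 + (W x)\<^sup>2"
      using zero_le_mult_iff[of "\<bar>Z x\<bar>" "\<bar>W x\<bar>"] by linarith
    then show "norm (Z x * W x) \<le> norm ((Z x)\<^sup>2 + (W x)\<^sup>2)"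
      by (simp add: abs_mult)
  qed
qed simp

lemma square_integrable_diff:
  fixes Z W :: "'a \<Rightarrow> real"
  assumes [measurable]: "Z \<in> borel_measurable M" "W \<in> borel_measurable M"
    and "integrable M (\<lambda>x. (Z x)\<^sup>2)" "integrable M (\<lambda>x. (W x)\<^sup>2)"
  shows "integrable M (\<lambda>x. (Z x - W x)\<^sup>2)"
proof -
  have "integrable M (\<lambda>x. (Z x)\<^sup>2 - 2 * (Z x * W x) + (W x)\<^sup>2)"
    using assms integrable_mult_of_square_integrable[OF assms] by auto
  then show ?thesis by (simp add: power2_diff mult.assoc algebra_simps)
qed

lemma square_le_twice_diff_square: "(a::real)\<^sup>2 \<le> 2 * (a - b)\<^sup>2 + 2 * b\<^sup>2"
proof -
  have "2 * (a - b)\<^sup>2 + 2 * b\<^sup>2 = a\<^sup>2 + (a - 2 * b)\<^sup>2" by (simp add: power2_diff algebra_simps)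
  then show ?thesis by simp
qed

lemma square_integrable_lincomb:
  fixes Z W :: "'a \<Rightarrow> real"
  assumes [measurable]: "Z \<in> borel_measurable M" "W \<in> borel_measurable M"
    and "integrable M (\<lambda>x. (Z x)\<^sup>2)" "integrable M (\<lambda>x. (W x)\<^sup>2)"
  shows "integrable M (\<lambda>x. (a * Z x + b * W x)\<^sup>2)"
proof -
  have "integrable M (\<lambda>x. a\<^sup>2 * (Z x)\<^sup>2 + 2 * a * b * (Z x * W x) + b\<^sup>2 * (W x)\<^sup>2)"
    using assms integrable_mult_of_square_integrable[OF assms] by auto
  then show ?thesis by (simp add: power2_sum power_mult_distrib algebra_simps)
qed

lemma Cauchy_Schwarz_integral:
  fixes Z W :: "'a \<Rightarrow> real"
  assumes [measurable]: "Z \<in> borel_measurable M" "W \<in> borel_measurable M"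
    and iZ: "integrable M (\<lambda>x. (Z x)\<^sup>2)" and iW: "integrable M (\<lambda>x. (W x)\<^sup>2)"
  shows "\<bar>\<integral>x. Z x * W x \<partial>M\<bar> \<le> sqrt (\<integral>x. (Z x)\<^sup>2 \<partial>M) * sqrt (\<integral>x. (W x)\<^sup>2 \<partial>M)"
proof -
  have iZW: "integrable M (\<lambda>x. \<bar>Z x\<bar> * \<bar>W x\<bar>)"
    using integrable_mult_of_square_integrable[OF assms] by (simp add: abs_mult[symmetric])
  have "(\<integral>\<^sup>+x. ennreal \<bar>Z x\<bar> * ennreal \<bar>W x\<bar> \<partial>M)\<^sup>2
      \<le> (\<integral>\<^sup>+x. (ennreal \<bar>Z x\<bar>)\<^sup>2 \<partial>M) * (\<integral>\<^sup>+x. (ennreal \<bar>W x\<bar>)\<^sup>2 \<partial>M)"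
    by (rule Cauchy_Schwarz_nn_integral) auto
  also have "(\<integral>\<^sup>+x. (ennreal \<bar>Z x\<bar>)\<^sup>2 \<partial>M) = ennreal (\<integral>x. (Z x)\<^sup>2 \<partial>M)"
    by (subst nn_integral_eq_integral[symmetric]) (auto simp: iZ ennreal_power)
  also have "(\<integral>\<^sup>+x. (ennreal \<bar>W x\<bar>)\<^sup>2 \<partial>M) = ennreal (\<integral>x. (W x)\<^sup>2 \<partial>M)"
    by (subst nn_integral_eq_integral[symmetric]) (auto simp: iW ennreal_power)
  also have "(\<integral>\<^sup>+x. ennreal \<bar>Z x\<bar> * ennreal \<bar>W x\<bar> \<partial>M) = ennreal (\<integral>x. \<bar>Z x\<bar> * \<bar>W x\<bar> \<partial>M)"
    by (subst nn_integral_eq_integral[symmetric]) (auto simp: iZW ennreal_mult'[symmetric])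
  finally have "(\<integral>x. \<bar>Z x\<bar> * \<bar>W x\<bar> \<partial>M)\<^sup>2 \<le> (\<integral>x. (Z x)\<^sup>2 \<partial>M) * (\<integral>x. (W x)\<^sup>2 \<partial>M)"
    by (simp add: ennreal_power ennreal_mult[symmetric] integral_nonneg_AE)
  then have "sqrt ((\<integral>x. \<bar>Z x\<bar> * \<bar>W x\<bar> \<partial>M)\<^sup>2) \<le> sqrt ((\<integral>x. (Z x)\<^sup>2 \<partial>M) * (\<integral>x. (W x)\<^sup>2 \<partial>M))"
    by (rule real_sqrt_le_mono)
  then have "(\<integral>x. \<bar>Z x\<bar> * \<bar>W x\<bar> \<partial>M) \<le> sqrt (\<integral>x. (Z x)\<^sup>2 \<partial>M) * sqrt (\<integral>x. (W x)\<^sup>2 \<partial>M)"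
    by (simp add: real_sqrt_mult integral_nonneg_AE)
  moreover have "\<bar>\<integral>x. Z x * W x \<partial>M\<bar> \<le> (\<integral>x. \<bar>Z x\<bar> * \<bar>W x\<bar> \<partial>M)"
    using integral_abs_bound[of M "\<lambda>x. Z x * W x"] by (simp add: abs_mult)
  ultimately show ?thesis by linarith
qed

lemma abs_integral_mult_diff_le:
  fixes X Y X' Y' :: "'a \<Rightarrow> real"
  assumes [measurable]: "X \<in> borel_measurable M" "Y \<in> borel_measurable M"
      "X' \<in> borel_measurable M" "Y' \<in> borel_measurable M"
    and sq: "integrable M (\<lambda>x. (X x)\<^sup>2)" "integrable M (\<lambda>x. (Y x)\<^sup>2)"
      "integrable M (\<lambda>x. (X' x)\<^sup>2)" "integrable M (\<lambda>x. (Y' x)\<^sup>2)"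
  shows "\<bar>(\<integral>x. X' x * Y' x \<partial>M) - (\<integral>x. X x * Y x \<partial>M)\<bar>
      \<le> sqrt (\<integral>x. (X x - X' x)\<^sup>2 \<partial>M) * sqrt (\<integral>x. (Y' x)\<^sup>2 \<partial>M)
       + sqrt (\<integral>x. (X x)\<^sup>2 \<partial>M) * sqrt (\<integral>x. (Y x - Y' x)\<^sup>2 \<partial>M)"
proof -
  have dX: "integrable M (\<lambda>x. (X' x - X x)\<^sup>2)" and dY: "integrable M (\<lambda>x. (Y' x - Y x)\<^sup>2)"
    by (intro square_integrable_diff sq; measurable)+
  have "(\<integral>x. (X' x - X x) * Y' x \<partial>M) + (\<integral>x. X x * (Y' x - Y x) \<partial>M)
      = (\<integral>x. (X' x - X x) * Y' x + X x * (Y' x - Y x) \<partial>M)"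
    using dX dY sq by (intro Bochner_Integration.integral_add[symmetric] integrable_mult_of_square_integrable) auto
  also have "\<dots> = (\<integral>x. X' x * Y' x - X x * Y x \<partial>M)"
    by (rule Bochner_Integration.integral_cong) (auto simp: algebra_simps)
  also have "\<dots> = (\<integral>x. X' x * Y' x \<partial>M) - (\<integral>x. X x * Y x \<partial>M)"
    using sq by (intro Bochner_Integration.integral_diff integrable_mult_of_square_integrable) auto
  finally have "(\<integral>x. X' x * Y' x \<partial>M) - (\<integral>x. X x * Y x \<partial>M)
      = (\<integral>x. (X' x - X x) * Y' x \<partial>M) + (\<integral>x. X x * (Y' x - Y x) \<partial>M)" ..
  also have "\<bar>\<dots>\<bar> \<le> \<bar>\<integral>x. (X' x - X x) * Y' x \<partial>M\<bar> + \<bar>\<integral>x. X x * (Y' x - Y x) \<partial>M\<bar>"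
    by (rule abs_triangle_ineq)
  also have "\<dots> \<le> sqrt (\<integral>x. (X' x - X x)\<^sup>2 \<partial>M) * sqrt (\<integral>x. (Y' x)\<^sup>2 \<partial>M)
       + sqrt (\<integral>x. (X x)\<^sup>2 \<partial>M) * sqrt (\<integral>x. (Y' x - Y x)\<^sup>2 \<partial>M)"
    using sq dX dY by (intro add_mono Cauchy_Schwarz_integral) auto
  finally show ?thesis by (simp add: power2_commute)
qed

lemma square_integrable_of_L2_approx:
  fixes X :: "'a \<Rightarrow> real" and Xk :: "nat \<Rightarrow> 'a \<Rightarrow> real"
  assumes [measurable]: "X \<in> borel_measurable M" "\<And>k. Xk k \<in> borel_measurable M"
    and sq: "\<And>k. integrable M (\<lambda>x. (Xk k x)\<^sup>2)"
    and lim: "(\<lambda>k. \<integral>\<^sup>+x. ennreal ((X x - Xk k x)\<^sup>2) \<partial>M) \<longlonglongrightarrow> 0"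
  shows "integrable M (\<lambda>x. (X x)\<^sup>2)"
    and "(\<lambda>k. \<integral>x. (X x - Xk k x)\<^sup>2 \<partial>M) \<longlonglongrightarrow> 0"
proof -
  obtain k where k: "(\<integral>\<^sup>+x. ennreal ((X x - Xk k x)\<^sup>2) \<partial>M) < 1"
    using order_tendstoD(2)[OF lim, of 1] by (auto simp: eventually_sequentially)
  have "(\<integral>\<^sup>+x. ennreal (norm ((X x)\<^sup>2)) \<partial>M)
      \<le> (\<integral>\<^sup>+x. 2 * ennreal ((X x - Xk k x)\<^sup>2) + 2 * ennreal ((Xk k x)\<^sup>2) \<partial>M)"
  proof (intro nn_integral_mono)
    fix x
    have "ennreal (norm ((X x)\<^sup>2)) \<le> ennreal (2 * (X x - Xk k x)\<^sup>2 + 2 * (Xk k x)\<^sup>2)"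
      by (rule ennreal_leI) (simp add: square_le_twice_diff_square)
    also have "\<dots> = 2 * ennreal ((X x - Xk k x)\<^sup>2) + 2 * ennreal ((Xk k x)\<^sup>2)"
      by (simp add: ennreal_plus ennreal_mult)
    finally show "ennreal (norm ((X x)\<^sup>2)) \<le> 2 * ennreal ((X x - Xk k x)\<^sup>2) + 2 * ennreal ((Xk k x)\<^sup>2)" .
  qed
  also have "\<dots> = 2 * (\<integral>\<^sup>+x. ennreal ((X x - Xk k x)\<^sup>2) \<partial>M) + 2 * (\<integral>\<^sup>+x. ennreal ((Xk k x)\<^sup>2) \<partial>M)"
    by (simp add: nn_integral_add nn_integral_cmult)
  also have "\<dots> < \<infinity>"
  proof -
    have "(\<integral>\<^sup>+x. ennreal ((X x - Xk k x)\<^sup>2) \<partial>M) < \<infinity>"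
      using order.strict_trans[OF k ennreal_one_less_top] by simp
    moreover have "(\<integral>\<^sup>+x. ennreal ((Xk k x)\<^sup>2) \<partial>M) < \<infinity>"
      by (subst nn_integral_eq_integral[OF sq]) auto
    ultimately show ?thesis by (simp add: ennreal_mult_less_top)
  qed
  finally show sqX: "integrable M (\<lambda>x. (X x)\<^sup>2)" by (intro integrableI_bounded) auto
  have "(\<lambda>k. ennreal (\<integral>x. (X x - Xk k x)\<^sup>2 \<partial>M)) \<longlonglongrightarrow> ennreal 0"
    using lim by (subst (asm) nn_integral_eq_integral[OF square_integrable_diff[OF _ _ sqX sq]]) auto
  then show "(\<lambda>k. \<integral>x. (X x - Xk k x)\<^sup>2 \<partial>M) \<longlonglongrightarrow> 0"
    by (subst (asm) tendsto_ennreal_iff) auto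
qed

lemma integral_mult_tendsto_of_L2_approx:
  fixes X Y :: "'a \<Rightarrow> real" and Xk Yk :: "nat \<Rightarrow> 'a \<Rightarrow> real"
  assumes [measurable]: "X \<in> borel_measurable M" "Y \<in> borel_measurable M"
      "\<And>k. Xk k \<in> borel_measurable M" "\<And>k. Yk k \<in> borel_measurable M"
    and sqX: "\<And>k. integrable M (\<lambda>x. (Xk k x)\<^sup>2)" and sqY: "\<And>k. integrable M (\<lambda>x. (Yk k x)\<^sup>2)"
    and limX: "(\<lambda>k. \<integral>\<^sup>+x. ennreal ((X x - Xk k x)\<^sup>2) \<partial>M) \<longlonglongrightarrow> 0"
    and limY: "(\<lambda>k. \<integral>\<^sup>+x. ennreal ((Y x - Yk k x)\<^sup>2) \<partial>M) \<longlonglongrightarrow> 0"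
  shows "integrable M (\<lambda>x. X x * Y x)"
    and "(\<lambda>k. \<integral>x. Xk k x * Yk k x \<partial>M) \<longlonglongrightarrow> (\<integral>x. X x * Y x \<partial>M)"
proof -
  note LX = square_integrable_of_L2_approx[OF assms(1,3) sqX limX]
  note LY = square_integrable_of_L2_approx[OF assms(2,4) sqY limY]
  show "integrable M (\<lambda>x. X x * Y x)"
    by (rule integrable_mult_of_square_integrable[OF assms(1,2) LX(1) LY(1)])
  define a where "a k = (\<integral>x. (X x - Xk k x)\<^sup>2 \<partial>M)" for k
  define b where "b k = (\<integral>x. (Y x - Yk k x)\<^sup>2 \<partial>M)" for k
  define AY where "AY = (\<integral>x. (Y x)\<^sup>2 \<partial>M)"
  have Yk_bound: "(\<integral>x. (Yk k x)\<^sup>2 \<partial>M) \<le> 2 * b k + 2 * AY" for k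
  proof -
    have dY: "integrable M (\<lambda>x. (Y x - Yk k x)\<^sup>2)"
      by (intro square_integrable_diff sqY LY(1); measurable)
    have "(\<integral>x. (Yk k x)\<^sup>2 \<partial>M) \<le> (\<integral>x. 2 * (Y x - Yk k x)\<^sup>2 + 2 * (Y x)\<^sup>2 \<partial>M)"
      using sqY LY(1) dY square_le_twice_diff_square[of "Yk k _" "Y _"]
      by (intro integral_mono) (auto simp: power2_commute)
    then show ?thesis using LY(1) dY by (simp add: b_def AY_def)
  qed
  have bound: "\<bar>(\<integral>x. Xk k x * Yk k x \<partial>M) - (\<integral>x. X x * Y x \<partial>M)\<bar>
      \<le> sqrt (a k) * sqrt (2 * b k + 2 * AY) + sqrt (\<integral>x. (X x)\<^sup>2 \<partial>M) * sqrt (b k)" for k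
  proof -
    have "sqrt (a k) * sqrt (\<integral>x. (Yk k x)\<^sup>2 \<partial>M) \<le> sqrt (a k) * sqrt (2 * b k + 2 * AY)"
      by (intro mult_left_mono real_sqrt_le_mono Yk_bound) (simp add: a_def integral_nonneg_AE)
    moreover have "\<bar>(\<integral>x. Xk k x * Yk k x \<partial>M) - (\<integral>x. X x * Y x \<partial>M)\<bar>
        \<le> sqrt (a k) * sqrt (\<integral>x. (Yk k x)\<^sup>2 \<partial>M) + sqrt (\<integral>x. (X x)\<^sup>2 \<partial>M) * sqrt (b k)"
      unfolding a_def b_def by (intro abs_integral_mult_diff_le LX(1) LY(1) sqX sqY; measurable)
    ultimately show ?thesis by linarith
  qed
  have "(\<lambda>k. sqrt (a k) * sqrt (2 * b k + 2 * AY) + sqrt (\<integral>x. (X x)\<^sup>2 \<partial>M) * sqrt (b k))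
      \<longlonglongrightarrow> sqrt 0 * sqrt (2 * 0 + 2 * AY) + sqrt (\<integral>x. (X x)\<^sup>2 \<partial>M) * sqrt 0"
    using LX(2) LY(2) unfolding a_def[symmetric] b_def[symmetric] by (intro tendsto_intros)
  then have "(\<lambda>k. sqrt (a k) * sqrt (2 * b k + 2 * AY) + sqrt (\<integral>x. (X x)\<^sup>2 \<partial>M) * sqrt (b k)) \<longlonglongrightarrow> 0"
    by simp
  then have "(\<lambda>k. (\<integral>x. Xk k x * Yk k x \<partial>M) - (\<integral>x. X x * Y x \<partial>M)) \<longlonglongrightarrow> 0"
    by (rule Lim_null_comparison[rotated]) (use bound in auto)
  then show "(\<lambda>k. \<integral>x. Xk k x * Yk k x \<partial>M) \<longlonglongrightarrow> (\<integral>x. X x * Y x \<partial>M)"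
    by (simp add: LIM_zero_iff)
qed

section \<open>Covariance of Wiener integrals\<close>

lemma integral_indicator_Ioc_mult:
  fixes a b c d :: real
  assumes "a \<le> b" "c \<le> d"
  shows "integrable lborel (\<lambda>r. indicator {a<..b} r * indicator {c<..d} r :: real)"
    and "(LINT r|lborel. indicator {a<..b} r * indicator {c<..d} r :: real) = min b d - min b c - min a d + min a c"
proof -
  have e: "(\<lambda>r. indicator {a<..b} r * indicator {c<..d} r :: real) = indicator {max a c<..min b d}"
    by (simp add: indicator_inter_arith[symmetric])
  show "integrable lborel (\<lambda>r. indicator {a<..b} r * indicator {c<..d} r :: real)"
    unfolding e by (cases "max a c \<le> min b d") auto
  show "(LINT r|lborel. indicator {a<..b} r * indicator {c<..d} r :: real) = min b d - min b c - min a d + min a c"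
    unfolding e using assms by (cases "max a c \<le> min b d") (auto simp: min_def max_def split: if_splits)
qed

lemma step_fun_mult_eq:
  "step_fun n ca a b r * step_fun m cb c d r
     = (\<Sum>i<n. \<Sum>j<m. ca i * cb j * (indicator {a i<..b i} r * indicator {c j<..d j} r))"
  unfolding step_fun_def sum_product by (intro sum.cong refl) (simp add: algebra_simps)

lemma step_int_mult_eq:
  "step_int U n ca a b \<omega> * step_int V m cb c d \<omega>
     = (\<Sum>i<n. \<Sum>j<m. ca i * cb j * (U (b i) \<omega> * V (d j) \<omega> - U (b i) \<omega> * V (c j) \<omega>
                                      - U (a i) \<omega> * V (d j) \<omega> + U (a i) \<omega> * V (c j) \<omega>))"
  unfolding step_int_def sum_product by (intro sum.cong refl) (simp add: algebra_simps)

lemma step_fun_eq_0_outside: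
  assumes "\<And>i. 0 \<le> a i \<and> b i \<le> T" and "r \<notin> {0..T}"
  shows "step_fun n c a b r = 0"
  unfolding step_fun_def
proof (intro sum.neutral ballI)
  fix i
  have "r \<notin> {a i<..b i}" using assms(1)[of i] assms(2) by auto
  then show "c i * indicator {a i<..b i} r = 0" by simp
qed

lemma integrable_step_fun_mult:
  assumes "\<And>i. a i \<le> b i" and "\<And>j. c j \<le> d j"
  shows "integrable lborel (\<lambda>r. step_fun n ca a b r * step_fun m cb c d r)"
  unfolding step_fun_mult_eq using integral_indicator_Ioc_mult(1) assms by auto

lemma integral_step_fun_mult:
  assumes "\<And>i. a i \<le> b i" and "\<And>j. c j \<le> d j"
  shows "(LINT r|lborel. step_fun n ca a b r * step_fun m cb c d r)
     = (\<Sum>i<n. \<Sum>j<m. ca i * cb j * (min (b i) (d j) - min (b i) (c j) - min (a i) (d j) + min (a i) (c j)))"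
  unfolding step_fun_mult_eq using integral_indicator_Ioc_mult assms
  by (simp add: Bochner_Integration.integral_sum)

lemma integrable_step_int_mult:
  assumes int: "\<And>x y. 0 \<le> x \<Longrightarrow> 0 \<le> y \<Longrightarrow> integrable M (\<lambda>\<omega>. U x \<omega> * V y \<omega>)"
    and "\<And>i. 0 \<le> a i \<and> a i \<le> b i" and "\<And>j. 0 \<le> c j \<and> c j \<le> d j"
  shows "integrable M (\<lambda>\<omega>. step_int U n ca a b \<omega> * step_int V m cb c d \<omega>)"
proof -
  have "0 \<le> a i" "0 \<le> b i" "0 \<le> c j" "0 \<le> d j" for i j
    using assms(2)[of i] assms(3)[of j] by auto
  then show ?thesis
    unfolding step_int_mult_eq by (intro Bochner_Integration.integrable_sum integrable_mult_right
        Bochner_Integration.integrable_add Bochner_Integration.integrable_diff int)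
qed

lemma integral_step_int_mult:
  assumes int: "\<And>x y. 0 \<le> x \<Longrightarrow> 0 \<le> y \<Longrightarrow> integrable M (\<lambda>\<omega>. U x \<omega> * V y \<omega>)"
    and cov: "\<And>x y. 0 \<le> x \<Longrightarrow> 0 \<le> y \<Longrightarrow> (\<integral>\<omega>. U x \<omega> * V y \<omega> \<partial>M) = \<rho> * min x y"
    and ab: "\<And>i. 0 \<le> a i \<and> a i \<le> b i" and cd: "\<And>j. 0 \<le> c j \<and> c j \<le> d j"
  shows "(\<integral>\<omega>. step_int U n ca a b \<omega> * step_int V m cb c d \<omega> \<partial>M)
       = \<rho> * (LINT r|lborel. step_fun n ca a b r * step_fun m cb c d r)"
proof -
  have nonneg: "0 \<le> a i" "0 \<le> b i" "0 \<le> c j" "0 \<le> d j" for i j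
    using ab[of i] cd[of j] by auto
  have "(\<integral>\<omega>. step_int U n ca a b \<omega> * step_int V m cb c d \<omega> \<partial>M)
      = (\<Sum>i<n. \<Sum>j<m. ca i * cb j * (\<rho> * min (b i) (d j) - \<rho> * min (b i) (c j)
                                     - \<rho> * min (a i) (d j) + \<rho> * min (a i) (c j)))"
    unfolding step_int_mult_eq using int nonneg
    by (simp add: Bochner_Integration.integral_sum Bochner_Integration.integral_add
        Bochner_Integration.integral_diff cov)
  also have "\<dots> = \<rho> * (LINT r|lborel. step_fun n ca a b r * step_fun m cb c d r)"
    unfolding integral_step_fun_mult[OF ab[THEN conjunct2] cd[THEN conjunct2]] sum_distrib_left
    by (intro sum.cong refl) (simp add: algebra_simps)
  finally show ?thesis .
qed

lemma wiener_integral_step_approx: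
  assumes "wiener_integral M W T f I"
  obtains n c a b where "\<And>k i. 0 \<le> a k i \<and> a k i \<le> b k i \<and> b k i \<le> T"
    and "(\<lambda>k. \<integral>\<^sup>+ r. ennreal ((indicator {0..T} r * f r - step_fun (n k) (c k) (a k) (b k) r)\<^sup>2) \<partial>lborel)
           \<longlonglongrightarrow> 0"
    and "(\<lambda>k. \<integral>\<^sup>+ \<omega>. ennreal ((I \<omega> - step_int W (n k) (c k) (a k) (b k) \<omega>)\<^sup>2) \<partial>M) \<longlonglongrightarrow> 0"
proof -
  from assms obtain n c a b where ab: "\<And>k i. 0 \<le> a k i \<and> a k i \<le> b k i \<and> b k i \<le> T"
    and f_lim: "(\<lambda>k. \<integral>\<^sup>+ r\<in>{0..T}. ennreal ((f r - step_fun (n k) (c k) (a k) (b k) r)\<^sup>2) \<partial>lborel) \<longlonglongrightarrow> 0"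
    and I_lim: "(\<lambda>k. \<integral>\<^sup>+ \<omega>. ennreal ((I \<omega> - step_int W (n k) (c k) (a k) (b k) \<omega>)\<^sup>2) \<partial>M) \<longlonglongrightarrow> 0"
    unfolding wiener_integral_def by blast
  have "(\<integral>\<^sup>+ r\<in>{0..T}. ennreal ((f r - step_fun (n k) (c k) (a k) (b k) r)\<^sup>2) \<partial>lborel)
      = (\<integral>\<^sup>+ r. ennreal ((indicator {0..T} r * f r - step_fun (n k) (c k) (a k) (b k) r)\<^sup>2) \<partial>lborel)" for k
  proof (intro nn_integral_cong)
    fix r
    have "r \<notin> {0..T} \<Longrightarrow> step_fun (n k) (c k) (a k) (b k) r = 0"
      by (rule step_fun_eq_0_outside) (use ab in auto)
    then show "ennreal ((f r - step_fun (n k) (c k) (a k) (b k) r)\<^sup>2) * indicator {0..T} r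
        = ennreal ((indicator {0..T} r * f r - step_fun (n k) (c k) (a k) (b k) r)\<^sup>2)"
      by (auto simp: indicator_def)
  qed
  with f_lim have f_lim': "(\<lambda>k. \<integral>\<^sup>+ r. ennreal ((indicator {0..T} r * f r - step_fun (n k) (c k) (a k) (b k) r)\<^sup>2) \<partial>lborel)
      \<longlonglongrightarrow> 0" by simp
  from ab f_lim' I_lim show ?thesis by (rule that)
qed

lemma wiener_integral_covariance:
  fixes U V :: "real \<Rightarrow> 'a \<Rightarrow> real"
  assumes [measurable]: "\<And>x. U x \<in> borel_measurable M" "\<And>x. V x \<in> borel_measurable M"
    and sqU: "\<And>x. 0 \<le> x \<Longrightarrow> integrable M (\<lambda>\<omega>. (U x \<omega>)\<^sup>2)"
    and sqV: "\<And>x. 0 \<le> x \<Longrightarrow> integrable M (\<lambda>\<omega>. (V x \<omega>)\<^sup>2)"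
    and cov: "\<And>x y. 0 \<le> x \<Longrightarrow> 0 \<le> y \<Longrightarrow> (\<integral>\<omega>. U x \<omega> * V y \<omega> \<partial>M) = \<rho> * min x y"
    and [measurable]: "f \<in> borel_measurable borel" "g \<in> borel_measurable borel"
    and I: "wiener_integral M U T f I" and J: "wiener_integral M V T g J"
  shows "set_integrable lborel {0..T} (\<lambda>r. f r * g r)"
    and "(\<integral>\<omega>. I \<omega> * J \<omega> \<partial>M) = \<rho> * (LBINT r:{0..T}. f r * g r)"
proof -
  have [measurable]: "I \<in> borel_measurable M" "J \<in> borel_measurable M"
    using I J unfolding wiener_integral_def by auto
  obtain n1 c1 a1 b1 where ab1: "\<And>k i. 0 \<le> a1 k i \<and> a1 k i \<le> b1 k i \<and> b1 k i \<le> T"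
    and f_lim: "(\<lambda>k. \<integral>\<^sup>+ r. ennreal ((indicator {0..T} r * f r - step_fun (n1 k) (c1 k) (a1 k) (b1 k) r)\<^sup>2)
                  \<partial>lborel) \<longlonglongrightarrow> 0"
    and I_lim: "(\<lambda>k. \<integral>\<^sup>+ \<omega>. ennreal ((I \<omega> - step_int U (n1 k) (c1 k) (a1 k) (b1 k) \<omega>)\<^sup>2) \<partial>M) \<longlonglongrightarrow> 0"
    by (rule wiener_integral_step_approx[OF I]) (rule that; assumption)
  obtain n2 c2 a2 b2 where ab2: "\<And>k i. 0 \<le> a2 k i \<and> a2 k i \<le> b2 k i \<and> b2 k i \<le> T"
    and g_lim: "(\<lambda>k. \<integral>\<^sup>+ r. ennreal ((indicator {0..T} r * g r - step_fun (n2 k) (c2 k) (a2 k) (b2 k) r)\<^sup>2)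
                  \<partial>lborel) \<longlonglongrightarrow> 0"
    and J_lim: "(\<lambda>k. \<integral>\<^sup>+ \<omega>. ennreal ((J \<omega> - step_int V (n2 k) (c2 k) (a2 k) (b2 k) \<omega>)\<^sup>2) \<partial>M) \<longlonglongrightarrow> 0"
    by (rule wiener_integral_step_approx[OF J]) (rule that; assumption)
  define Xk where "Xk k = step_int U (n1 k) (c1 k) (a1 k) (b1 k)" for k
  define Yk where "Yk k = step_int V (n2 k) (c2 k) (a2 k) (b2 k)" for k
  define fk where "fk k = step_fun (n1 k) (c1 k) (a1 k) (b1 k)" for k
  define gk where "gk k = step_fun (n2 k) (c2 k) (a2 k) (b2 k)" for k
  have [measurable]: "Xk k \<in> borel_measurable M" for k unfolding Xk_def step_int_def by measurable
  have [measurable]: "Yk k \<in> borel_measurable M" for k unfolding Yk_def step_int_def by measurable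
  have [measurable]: "fk k \<in> borel_measurable lborel" for k unfolding fk_def step_fun_def by measurable
  have [measurable]: "gk k \<in> borel_measurable lborel" for k unfolding gk_def step_fun_def by measurable
  have ab1': "\<And>k i. 0 \<le> a1 k i \<and> a1 k i \<le> b1 k i" and ab2': "\<And>k i. 0 \<le> a2 k i \<and> a2 k i \<le> b2 k i"
    using ab1 ab2 by auto
  have int_UU: "integrable M (\<lambda>\<omega>. U x \<omega> * U y \<omega>)"
    and int_UV: "integrable M (\<lambda>\<omega>. U x \<omega> * V y \<omega>)"
    and int_VV: "integrable M (\<lambda>\<omega>. V x \<omega> * V y \<omega>)" if "0 \<le> x" "0 \<le> y" for x y
    by (intro integrable_mult_of_square_integrable sqU sqV that assms(1,2))+
  have sqXk: "integrable M (\<lambda>\<omega>. (Xk k \<omega>)\<^sup>2)" for k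
    using integrable_step_int_mult[OF int_UU ab1' ab1'] unfolding Xk_def power2_eq_square .
  have sqYk: "integrable M (\<lambda>\<omega>. (Yk k \<omega>)\<^sup>2)" for k
    using integrable_step_int_mult[OF int_VV ab2' ab2'] unfolding Yk_def power2_eq_square .
  have sqfk: "integrable lborel (\<lambda>r. (fk k r)\<^sup>2)" for k
    using integrable_step_fun_mult ab1 unfolding fk_def power2_eq_square by blast
  have sqgk: "integrable lborel (\<lambda>r. (gk k r)\<^sup>2)" for k
    using integrable_step_fun_mult ab2 unfolding gk_def power2_eq_square by blast
  have "(\<lambda>k. \<integral>\<omega>. Xk k \<omega> * Yk k \<omega> \<partial>M) \<longlonglongrightarrow> (\<integral>\<omega>. I \<omega> * J \<omega> \<partial>M)"
    using I_lim J_lim unfolding Xk_def[symmetric] Yk_def[symmetric]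
    by (intro integral_mult_tendsto_of_L2_approx(2) sqXk sqYk) simp_all
  moreover have "(\<integral>\<omega>. Xk k \<omega> * Yk k \<omega> \<partial>M) = \<rho> * (LINT r|lborel. fk k r * gk k r)" for k
    unfolding Xk_def Yk_def fk_def gk_def by (rule integral_step_int_mult[OF int_UV cov ab1' ab2'])
  ultimately have lim_M: "(\<lambda>k. \<rho> * (LINT r|lborel. fk k r * gk k r)) \<longlonglongrightarrow> (\<integral>\<omega>. I \<omega> * J \<omega> \<partial>M)"
    by simp
  note fg_limit = integral_mult_tendsto_of_L2_approx[of "\<lambda>r. indicator {0..T} r * f r" lborel
      "\<lambda>r. indicator {0..T} r * g r" fk gk, OF _ _ _ _ sqfk sqgk]
  have "(\<lambda>k. LINT r|lborel. fk k r * gk k r)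
      \<longlonglongrightarrow> (LINT r|lborel. (indicator {0..T} r * f r) * (indicator {0..T} r * g r))"
    using f_lim g_lim unfolding fk_def[symmetric] gk_def[symmetric] by (intro fg_limit) simp_all
  then have "(\<lambda>k. \<rho> * (LINT r|lborel. fk k r * gk k r))
      \<longlonglongrightarrow> \<rho> * (LINT r|lborel. (indicator {0..T} r * f r) * (indicator {0..T} r * g r))"
    by (rule tendsto_mult_left)
  with lim_M have "(\<integral>\<omega>. I \<omega> * J \<omega> \<partial>M)
      = \<rho> * (LINT r|lborel. (indicator {0..T} r * f r) * (indicator {0..T} r * g r))"
    by (rule LIMSEQ_unique)
  moreover have "integrable lborel (\<lambda>r. (indicator {0..T} r * f r) * (indicator {0..T} r * g r))"
    using f_lim g_lim unfolding fk_def[symmetric] gk_def[symmetric] by (intro fg_limit) simp_all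
  moreover have "(indicator {0..T} r * f r) * (indicator {0..T} r * g r) = indicator {0..T} r *\<^sub>R (f r * g r)"
    for r :: real by (simp add: indicator_def)
  ultimately show "set_integrable lborel {0..T} (\<lambda>r. f r * g r)"
    and "(\<integral>\<omega>. I \<omega> * J \<omega> \<partial>M) = \<rho> * (LBINT r:{0..T}. f r * g r)"
    unfolding set_integrable_def set_lebesgue_integral_def by simp_all
qed

section \<open>Correlated Brownian motions\<close>

context prob_space
begin

lemma std_BM_moments:
  assumes BM: "std_BM M W" and x: "0 \<le> x"
  shows "integrable M (W x)" and "expectation (W x) = 0"
    and "integrable M (\<lambda>\<omega>. (W x \<omega>)\<^sup>2)" and "expectation (\<lambda>\<omega>. (W x \<omega>)\<^sup>2) = x"
proof -
  from BM have W0: "\<And>\<omega>. \<omega> \<in> space M \<Longrightarrow> W 0 \<omega> = 0"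
    and D: "\<And>s t. 0 \<le> s \<Longrightarrow> s < t \<Longrightarrow>
      distributed M lborel (\<lambda>\<omega>. W t \<omega> - W s \<omega>) (normal_density 0 (sqrt (t - s)))"
    unfolding std_BM_def by auto
  have "integrable M (\<lambda>\<omega>. W x \<omega> - W 0 \<omega>) \<and> expectation (\<lambda>\<omega>. W x \<omega> - W 0 \<omega>) = 0 \<and>
      integrable M (\<lambda>\<omega>. (W x \<omega> - W 0 \<omega>)\<^sup>2) \<and> expectation (\<lambda>\<omega>. (W x \<omega> - W 0 \<omega>)\<^sup>2) = x"
  proof (cases "x = 0")
    case False
    then have sx: "0 < sqrt x" using x by simp
    have Dx: "distributed M lborel (\<lambda>\<omega>. W x \<omega> - W 0 \<omega>) (normal_density 0 (sqrt x))"
      using D[of 0 x] x False by simp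
    have "integrable M (\<lambda>\<omega>. W x \<omega> - W 0 \<omega>)"
      using integrable_normal_moment_nz_1[OF sx, of 0]
      by (subst distributed_integrable[OF Dx, of "\<lambda>z. z", symmetric]) (auto simp: normal_density_nonneg)
    moreover have "integrable M (\<lambda>\<omega>. (W x \<omega> - W 0 \<omega>)\<^sup>2)"
      using integrable_normal_moment[OF sx, of 0 2]
      by (subst distributed_integrable[OF Dx, of "\<lambda>z. z\<^sup>2", symmetric]) (auto simp: normal_density_nonneg)
    moreover have "expectation (\<lambda>\<omega>. W x \<omega> - W 0 \<omega>) = 0"
      by (rule normal_distributed_expectation[OF sx Dx])
    moreover have "variance (\<lambda>\<omega>. W x \<omega> - W 0 \<omega>) = x"
      using normal_distributed_variance[OF sx Dx] x by simp
    ultimately show ?thesis by simp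
  qed simp
  moreover have "\<And>\<omega>. \<omega> \<in> space M \<Longrightarrow> W x \<omega> - W 0 \<omega> = W x \<omega>"
    using W0 by simp
  ultimately show "integrable M (W x)" and "expectation (W x) = 0"
    and "integrable M (\<lambda>\<omega>. (W x \<omega>)\<^sup>2)" and "expectation (\<lambda>\<omega>. (W x \<omega>)\<^sup>2) = x"
    by (simp_all cong: Bochner_Integration.integrable_cong Bochner_Integration.integral_cong)
qed

lemma std_BM_indep_increments:
  assumes BM: "std_BM M W" and "0 < x" "x < y"
  shows "indep_var borel (\<lambda>\<omega>. W x \<omega> - W 0 \<omega>) borel (\<lambda>\<omega>. W y \<omega> - W x \<omega>)"
proof -
  from BM have I: "\<And>n tt. 0 \<le> tt 0 \<and> (\<forall>i<n. tt i < tt (Suc i)) \<Longrightarrow>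
      indep_vars (\<lambda>_. borel) (\<lambda>i \<omega>. W (tt (Suc i)) \<omega> - W (tt i) \<omega>) {..<n}"
    unfolding std_BM_def by auto
  define tt :: "nat \<Rightarrow> real" where "tt i = (if i = 0 then 0 else if i = 1 then x else y)" for i
  have "indep_vars (\<lambda>_. borel) (\<lambda>i \<omega>. W (tt (Suc i)) \<omega> - W (tt i) \<omega>) {..<2}"
    by (rule I) (use assms in \<open>auto simp: tt_def less_2_cases_iff\<close>)
  from indep_var_restrict[OF this, of "{0}" "{1}"]
  have "indep_var (Pi\<^sub>M {0} (\<lambda>_. borel)) (\<lambda>\<omega>. restrict (\<lambda>i. W (tt (Suc i)) \<omega> - W (tt i) \<omega>) {0})
                  (Pi\<^sub>M {1} (\<lambda>_. borel)) (\<lambda>\<omega>. restrict (\<lambda>i. W (tt (Suc i)) \<omega> - W (tt i) \<omega>) {1})"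
    by auto
  from indep_var_compose[OF this, of "\<lambda>f. f 0" borel "\<lambda>f. f 1" borel] show ?thesis
    by (simp add: comp_def tt_def measurable_component_singleton)
qed

lemma std_BM_covariance_le:
  assumes BM: "std_BM M W" and x: "0 \<le> x" and xy: "x \<le> y"
  shows "expectation (\<lambda>\<omega>. W x \<omega> * W y \<omega>) = x"
proof -
  have W0: "\<And>\<omega>. \<omega> \<in> space M \<Longrightarrow> W 0 \<omega> = 0" using BM unfolding std_BM_def by auto
  consider "x = 0" | "x = y" | "0 < x" "x < y" using x xy by linarith
  then show ?thesis
  proof cases
    case 1
    then show ?thesis by (simp add: W0 cong: Bochner_Integration.integral_cong)
  next
    case 2
    then show ?thesis using std_BM_moments[OF BM x] by (simp add: power2_eq_square)
  next
    case 3
    note IV = std_BM_indep_increments[OF BM 3]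
    have int: "integrable M (\<lambda>\<omega>. W x \<omega> - W 0 \<omega>)" "integrable M (\<lambda>\<omega>. W y \<omega> - W x \<omega>)"
      using std_BM_moments(1)[OF BM] x xy by auto
    have "expectation (\<lambda>\<omega>. W x \<omega> * W y \<omega>)
        = expectation (\<lambda>\<omega>. (W x \<omega> - W 0 \<omega>) * (W y \<omega> - W x \<omega>) + (W x \<omega>)\<^sup>2)"
      by (rule Bochner_Integration.integral_cong) (auto simp: W0 power2_eq_square algebra_simps)
    also have "\<dots> = x"
      using indep_var_lebesgue_integral[OF IV int] indep_var_integrable[OF IV int]
        std_BM_moments[OF BM] x xy by simp
    finally show ?thesis .
  qed
qed

lemma std_BM_covariance:
  assumes BM: "std_BM M W" and "0 \<le> x" "0 \<le> y"
  shows "expectation (\<lambda>\<omega>. W x \<omega> * W y \<omega>) = min x y"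
  using std_BM_covariance_le[OF BM, of x y] std_BM_covariance_le[OF BM, of y x] assms
  by (cases "x \<le> y") (auto simp: mult.commute)

lemma indep_std_BM_covariance:
  assumes BM: "std_BM M W" "std_BM M V"
    and ind: "indep_var (Pi\<^sub>M UNIV (\<lambda>_. borel)) (\<lambda>\<omega> t. W t \<omega>) (Pi\<^sub>M UNIV (\<lambda>_. borel)) (\<lambda>\<omega> t. V t \<omega>)"
    and "0 \<le> x" "0 \<le> y"
  shows "expectation (\<lambda>\<omega>. W x \<omega> * V y \<omega>) = 0"
proof -
  from indep_var_compose[OF ind, of "\<lambda>f. f x" borel "\<lambda>f. f y" borel]
  have IV: "indep_var borel (W x) borel (V y)"
    by (simp add: comp_def measurable_component_singleton)
  have "integrable M (W x)" "integrable M (V y)"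
    using std_BM_moments(1) BM assms by auto
  from indep_var_lebesgue_integral[OF IV this] show ?thesis
    using std_BM_moments(2) BM assms by simp
qed

lemma correlated_std_BM_covariance:
  assumes BM: "std_BM M W" "std_BM M V"
    and ind: "indep_var (Pi\<^sub>M UNIV (\<lambda>_. borel)) (\<lambda>\<omega> t. W t \<omega>) (Pi\<^sub>M UNIV (\<lambda>_. borel)) (\<lambda>\<omega> t. V t \<omega>)"
    and "0 \<le> x" "0 \<le> y"
  shows "expectation (\<lambda>\<omega>. W x \<omega> * (\<rho> * W y \<omega> + \<sigma> * V y \<omega>)) = \<rho> * min x y"
proof -
  have [measurable]: "W t \<in> borel_measurable M" "V t \<in> borel_measurable M" for t
    using BM unfolding std_BM_def by auto
  have "integrable M (\<lambda>\<omega>. W x \<omega> * W y \<omega>)" "integrable M (\<lambda>\<omega>. W x \<omega> * V y \<omega>)"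
    using std_BM_moments(3) BM assms by (auto intro: integrable_mult_of_square_integrable)
  then have "expectation (\<lambda>\<omega>. \<rho> * (W x \<omega> * W y \<omega>) + \<sigma> * (W x \<omega> * V y \<omega>)) = \<rho> * min x y"
    using std_BM_covariance[OF BM(1)] indep_std_BM_covariance[OF BM ind] assms by simp
  then show ?thesis by (simp add: algebra_simps)
qed

end

theorem mainTheorem1:
  fixes M :: "'a measure"
    and Wt1 Wt2 W1 W2 B1 B2 :: "real \<Rightarrow> 'a \<Rightarrow> real"
    and T H1 H2 \<rho> :: real
  assumes "prob_space M"
    and "T > 0"
    and "1/2 < H1" "H1 < 1" "1/2 < H2" "H2 < 1"
    and "-1 \<le> \<rho>" "\<rho> \<le> 1"
    and "std_BM M Wt1" and "std_BM M Wt2"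
    and "prob_space.indep_var M (Pi\<^sub>M UNIV (\<lambda>_. borel)) (\<lambda>\<omega> t. Wt1 t \<omega>)
                                 (Pi\<^sub>M UNIV (\<lambda>_. borel)) (\<lambda>\<omega> t. Wt2 t \<omega>)"
    and "W1 = Wt1"
    and "W2 = (\<lambda>t \<omega>. \<rho> * Wt1 t \<omega> + sqrt (1 - \<rho>\<^sup>2) * Wt2 t \<omega>)"
    and "\<forall>t\<in>{0..T}. wiener_integral M W1 T (KH H1 t) (B1 t)"
    and "\<forall>t\<in>{0..T}. wiener_integral M W2 T (KH H2 t) (B2 t)"
    and "\<forall>\<omega>\<in>space M. continuous_on {0..T} (\<lambda>t. B1 t \<omega>)"
    and "\<forall>\<omega>\<in>space M. continuous_on {0..T} (\<lambda>t. B2 t \<omega>)"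
    and "t \<in> {0..T}" and "s \<in> {0..T}"
  shows "prob_space.expectation M (\<lambda>\<omega>. B1 t \<omega> * B2 s \<omega>) =
    \<rho> * cH H1 * cH H2 *
      (LBINT u:{0..t}. (LBINT v:{0..s}.
         beta_fn H1 H2 u v * \<bar>u - v\<bar> powr (H1 + H2 - 2) * u powr (H1 - H2) * v powr (H2 - H1)))"
proof -
  interpret prob_space M by fact
  note H = assms(3-6) and BM = assms(9,10) and ind = assms(11)
  have [measurable]: "Wt1 x \<in> borel_measurable M" "Wt2 x \<in> borel_measurable M" for x
    using BM unfolding std_BM_def by auto
  define \<sigma> where "\<sigma> = sqrt (1 - \<rho>\<^sup>2)"
  have wi1: "wiener_integral M Wt1 T (KH H1 t) (B1 t)"
    using assms(12,14,18) by simp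
  have wi2: "wiener_integral M (\<lambda>x \<omega>. \<rho> * Wt1 x \<omega> + \<sigma> * Wt2 x \<omega>) T (KH H2 s) (B2 s)"
    using assms(13,15,19) by (simp add: \<sigma>_def)
  have sq: "integrable M (\<lambda>\<omega>. (Wt1 x \<omega>)\<^sup>2)" "integrable M (\<lambda>\<omega>. (\<rho> * Wt1 x \<omega> + \<sigma> * Wt2 x \<omega>)\<^sup>2)"
    if "0 \<le> x" for x
    using std_BM_moments(3)[OF BM(1) that] std_BM_moments(3)[OF BM(2) that]
    by (auto intro: square_integrable_lincomb)
  note cov = wiener_integral_covariance[OF _ _ sq correlated_std_BM_covariance[OF BM ind]
      KH_measurable[OF H(1,2)] KH_measurable[OF H(3,4)] wi1 wi2]
  have "set_integrable lborel {0..T} (\<lambda>r. KH H1 t r * KH H2 s r)"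
    and "expectation (\<lambda>\<omega>. B1 t \<omega> * B2 s \<omega>) = \<rho> * (LBINT r:{0..T}. KH H1 t r * KH H2 s r)"
    by (rule cov; measurable)+
  moreover have "(\<lambda>r. indicator {0..T} r *\<^sub>R (KH H1 t r * KH H2 s r)) = (\<lambda>r. KH H1 t r * KH H2 s r)"
    using assms(18) by (auto simp: KH_def indicator_def)
  ultimately have "integrable lborel (\<lambda>r. KH H1 t r * KH H2 s r)"
    and "expectation (\<lambda>\<omega>. B1 t \<omega> * B2 s \<omega>) = \<rho> * (LINT r|lborel. KH H1 t r * KH H2 s r)"
    unfolding set_integrable_def set_lebesgue_integral_def by metis+
  then show ?thesis
    using integral_KH_mult_KH[OF H] unfolding fBm_cross_density_def by (simp add: mult_ac)
qed

end
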